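(* Let $c,d>0$ and $g(x)=xF(c,d;c+d;x)$ for $x\in(0,1)$. The function $G(u)=\log g\!\left(\frac{e^u}{1+e^u}\right)$ is concave on $(-\infty,\infty)$ if and only if $\frac1c+\frac1d\ge1$.
   Context: $F(a,b;c;x)$ is the Gaussian hypergeometric function $\sum_{n\ge0}\frac{(a)_n(b)_n}{(c)_n}\frac{x^n}{n!}$ ($|x|<1$), with $(a)_n=a(a+1)\cdots(a+n-1)$, $(a)_0=1$. *)

theory Defs
  imports "HOL-Analysis.Analysis"
begin

text \<open>Gaussian hypergeometric function F(a,b;c;x) = sum_n (a)_n (b)_n / (c)_n * x^n / n!,
  intended for |x| < 1.\<close>
definition hyp2F1 :: "real \<Rightarrow> real \<Rightarrow> real \<Rightarrow> real \<Rightarrow> real" where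
  "hyp2F1 a b c x = (\<Sum>n. pochhammer a n * pochhammer b n / pochhammer c n * x ^ n / fact n)"

end

theory Submission
  imports Defs
begin

(* Write g(x) = x F(x) with F(x) = F(c,d;c+d;x), and x = logistic u = e^u/(1+e^u).  The function
   G(u) = log g(logistic u) has derivative H(logistic u), where H(x) = (1-x)(F + x F')/F; since the
   logistic map is an increasing bijection of the line onto (0,1), G is concave iff H decreases on
   (0,1).  Put s = c + d and p = c d, so 1/c + 1/d >= 1 means p <= s.

   In the locale
   zero_balanced the hypergeometric series is studied through its coefficients: convergence,
   term-by-term derivatives, Gauss' differential equation, and for p <= s the bounds 1-x < H <= 1.
   From the differential equation H satisfies x(1-x)H' = R(x,H) with a quadratic R; a barrier
   argument on the curve R = 0 gives H' <= 0 when p <= s, while H'(0) = p/s - 1 > 0 when p > s. *)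

text \<open>A differentiable function on the real line is concave iff its derivative is
  nonincreasing (one direction by tangent lines, the other by the mean value theorem).\<close>

lemma concave_on_UNIV_iff_deriv_antimono:
  fixes f f' :: "real \<Rightarrow> real"
  assumes f': "\<And>x. (f has_real_derivative f' x) (at x)"
  shows "concave_on UNIV f \<longleftrightarrow> (\<forall>x y. x \<le> y \<longrightarrow> f' y \<le> f' x)"
proof
  assume "concave_on UNIV f"
  then have conv: "convex_on UNIV (\<lambda>x. - f x)" by (simp add: concave_on_def)
  have tangent: "- f y + f x \<ge> - f' x * (y - x)" for x y
    using convex_on_imp_above_tangent[OF conv, of x y "- f' x"] f' by (auto intro: DERIV_minus)
  show "\<forall>x y. x \<le> y \<longrightarrow> f' y \<le> f' x"
  proof (intro allI impI)
    fix x y :: real assume "x \<le> y"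
    have "(y - x) * (f' y - f' x) \<le> 0"
      using tangent[of x y] tangent[of y x] by (simp add: algebra_simps)
    then show "f' y \<le> f' x" using \<open>x \<le> y\<close> by (cases "x = y") (auto simp: mult_le_0_iff)
  qed
next
  assume "\<forall>x y. x \<le> y \<longrightarrow> f' y \<le> f' x"
  then have "convex_on UNIV (\<lambda>x. - f x)"
    by (intro convex_on_realI[where f' = "\<lambda>x. - f' x"]) (auto intro: DERIV_minus f')
  then show "concave_on UNIV f" by (simp add: concave_on_def)
qed

definition logistic :: "real \<Rightarrow> real" where
  "logistic u = exp u / (1 + exp u)"

lemma logistic_bounds: "0 < logistic u" "logistic u < 1"
  by (simp_all add: logistic_def add_pos_pos)

lemma logistic_mono: "u \<le> v \<Longrightarrow> logistic u \<le> logistic v"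
  by (simp add: logistic_def divide_simps add_pos_pos algebra_simps)

lemma logistic_logit: "0 < x \<Longrightarrow> x < 1 \<Longrightarrow> logistic (ln (x / (1 - x))) = x"
  by (simp add: logistic_def field_simps)

lemma logistic_deriv: "(logistic has_real_derivative logistic u * (1 - logistic u)) (at u)"
proof -
  have "0 < 1 + exp u" by (simp add: add_pos_pos)
  then show ?thesis unfolding logistic_def[abs_def]
    by (auto intro!: derivative_eq_intros simp: field_simps power2_eq_square)
qed

lemma concave_on_UNIV_logistic_iff:
  fixes G h :: "real \<Rightarrow> real"
  assumes G': "\<And>u. (G has_real_derivative h (logistic u)) (at u)"
  shows "concave_on UNIV G \<longleftrightarrow> (\<forall>x y. 0 < x \<longrightarrow> x \<le> y \<longrightarrow> y < 1 \<longrightarrow> h y \<le> h x)"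
  unfolding concave_on_UNIV_iff_deriv_antimono[OF G']
proof safe
  fix x y :: real
  assume antimono: "\<forall>u v. u \<le> v \<longrightarrow> h (logistic v) \<le> h (logistic u)"
    and xy: "0 < x" "x \<le> y" "y < 1"
  have "ln (x / (1 - x)) \<le> ln (y / (1 - y))"
    using xy by (simp add: divide_simps algebra_simps)
  then show "h y \<le> h x"
    using antimono xy by (metis logistic_logit order.strict_trans1 order.strict_trans2)
next
  fix u v :: real
  assume "\<forall>x y. 0 < x \<longrightarrow> x \<le> y \<longrightarrow> y < 1 \<longrightarrow> h y \<le> h x" "u \<le> v"
  then show "h (logistic v) \<le> h (logistic u)"
    by (simp add: logistic_bounds logistic_mono)
qed

text \<open>This is the barrier principle behind the
  sufficiency proof.\<close>

lemma last_zero_before_positive: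
  fixes K K' :: "real \<Rightarrow> real"
  assumes ty: "t < y" and Kt: "K t \<le> 0" and Ky: "0 < K y"
    and K': "\<And>x. t \<le> x \<Longrightarrow> x \<le> y \<Longrightarrow> (K has_real_derivative K' x) (at x)"
  obtains x where "t \<le> x" "x < y" "K x = 0" "0 \<le> K' x"
proof -
  define S where "S = {t..y} \<inter> K -` {..0}"
  have "continuous_on {t..y} K"
    using K' by (intro DERIV_atLeastAtMost_imp_continuous_on) blast
  then have "closed S"
    unfolding S_def by (intro continuous_closed_preimage) auto
  moreover have "t \<in> S" "bdd_above S"
    using ty Kt by (auto simp: S_def)
  ultimately have xS: "Sup S \<in> S" and upper: "\<And>z. z \<in> S \<Longrightarrow> z \<le> Sup S"
    by (auto intro: closed_contains_Sup cSup_upper)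
  define x where "x = Sup S"
  have x: "t \<le> x" "x \<le> y" "K x \<le> 0"
    using xS by (auto simp: S_def x_def)
  then have "x < y" using Ky by (cases "x = y") auto
  have pos_after: "0 < K z" if "x < z" "z \<le> y" for z
    using that x upper[of z] by (force simp: S_def x_def)
  have Kx: "K x = 0"
  proof (rule ccontr)
    assume "K x \<noteq> 0"
    with x have "K x < 0" by simp
    have "continuous_on {x..y} K"
      using K' x by (intro DERIV_atLeastAtMost_imp_continuous_on) (meson order_trans)
    then obtain z where "x \<le> z" "z \<le> y" "K z = 0"
      using IVT'[of K x 0 y] \<open>K x < 0\<close> Ky \<open>x < y\<close> by force
    then show False
      using pos_after[of z] \<open>K x < 0\<close> by (cases "z = x") auto
  qed
  have "0 \<le> K' x"
  proof (rule ccontr)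
    assume "\<not> 0 \<le> K' x"
    then obtain \<delta> where \<delta>: "\<delta> > 0" "\<And>h. 0 < h \<Longrightarrow> h < \<delta> \<Longrightarrow> K (x + h) < K x"
      using DERIV_neg_dec_right[OF K'[OF x(1,2)]] by force
    define h where "h = min \<delta> (y - x) / 2"
    have "0 < h" "h < \<delta>" "x + h \<le> y"
      using \<delta>(1) \<open>x < y\<close> by (auto simp: h_def min_def field_simps)
    then show False
      using \<delta>(2)[of h] pos_after[of "x + h"] Kx by simp
  qed
  then show thesis using that x \<open>x < y\<close> Kx by blast
qed

lemma sums_times_x:
  fixes g :: "nat \<Rightarrow> real"
  assumes "(\<lambda>n. g (Suc n) * x ^ n) sums S" "g 0 = 0"
  shows "(\<lambda>n. g n * x ^ n) sums (x * S)"
proof -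
  have "(\<lambda>n. g (Suc n) * x ^ Suc n) sums (x * S)"
    using sums_mult[OF assms(1), of x] by (simp add: ac_simps)
  then show ?thesis using sums_Suc_iff[of "\<lambda>n. g n * x ^ n"] assms(2) by simp
qed

locale zero_balanced =
  fixes c d :: real
  assumes c_pos: "0 < c" and d_pos: "0 < d"
begin

definition s :: real where "s = c + d"
definition p :: real where "p = c * d"

definition coef :: "nat \<Rightarrow> real" where
  "coef n = pochhammer c n * pochhammer d n / pochhammer (c + d) n / fact n"

definition F :: "real \<Rightarrow> real" where "F x = (\<Sum>n. coef n * x ^ n)"
definition F' :: "real \<Rightarrow> real" where "F' x = (\<Sum>n. diffs coef n * x ^ n)"
definition F'' :: "real \<Rightarrow> real" where "F'' x = (\<Sum>n. diffs (diffs coef) n * x ^ n)"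

lemma F_eq_hyp2F1: "hyp2F1 c d (c + d) x = F x"
  unfolding hyp2F1_def F_def coef_def by (simp add: field_simps)

lemma s_pos: "0 < s" and p_pos: "0 < p"
  using c_pos d_pos by (simp_all add: s_def p_def)

lemma coef_pos: "0 < coef n"
  using c_pos d_pos by (auto simp: coef_def intro!: divide_pos_pos mult_pos_pos pochhammer_pos)

lemma coef_0: "coef 0 = 1"
  by (simp add: coef_def)

lemma coef_Suc: "coef (Suc n) = coef n * ((c + n) * (d + n)) / ((s + n) * (n + 1))"
proof -
  have "0 < pochhammer (c + d) n" "0 < c + d + n"
    using c_pos d_pos by (simp_all add: pochhammer_pos)
  then show ?thesis
    by (simp add: coef_def s_def pochhammer_rec' field_simps)
qed

lemma coef_rec: "(real n + 1) * (s + n) * coef (Suc n) = (c + n) * (d + n) * coef n"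
proof -
  have "(s + n) * (n + 1) \<noteq> 0"
    using s_pos by (simp add: add_pos_nonneg)
  then show ?thesis by (simp add: coef_Suc field_simps)
qed

lemma coef_1: "coef 1 = p / s"
  using coef_Suc[of 0] by (simp add: coef_0 p_def)

lemma coef_decreasing:
  assumes "p \<le> s" shows "coef (Suc n) \<le> coef n"
proof -
  have "(c + n) * (d + n) \<le> (real n + 1) * (s + n)"
    using assms by (simp add: p_def s_def algebra_simps)
  then have "(real n + 1) * (s + n) * coef (Suc n) \<le> (real n + 1) * (s + n) * coef n"
    unfolding coef_rec using coef_pos[of n] by (intro mult_right_mono) auto
  moreover have "0 < (real n + 1) * (s + n)"
    using s_pos by (simp add: add_pos_nonneg)
  ultimately show ?thesis by (meson mult_le_cancel_left_pos)
qed

text \<open>The series converges for \<open>|x| < 1\<close>: eventually the coefficient ratio is at most 1.\<close>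

lemma summable_coef: assumes "\<bar>x\<bar> < 1" shows "summable (\<lambda>n. coef n * x ^ n)"
proof (rule summable_ratio_test[of "\<bar>x\<bar>" "nat \<lceil>p\<rceil>"])
  fix n assume "nat \<lceil>p\<rceil> \<le> n"
  then have "(c + n) * (d + n) \<le> (s + n) * (n + 1)"
    using s_pos by (simp add: p_def s_def algebra_simps)
  moreover have "0 < (s + n) * (n + 1)"
    using s_pos by (simp add: add_pos_nonneg)
  ultimately have ratio: "(c + n) * (d + n) / ((s + n) * (n + 1)) \<le> 1"
    by simp
  have "norm (coef (Suc n) * x ^ Suc n)
      = coef n * ((c + n) * (d + n) / ((s + n) * (n + 1))) * (\<bar>x\<bar> * \<bar>x\<bar> ^ n)"
    using coef_pos[of n] c_pos d_pos s_pos by (simp add: coef_Suc abs_mult power_abs)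
  also have "\<dots> \<le> coef n * 1 * (\<bar>x\<bar> * \<bar>x\<bar> ^ n)"
    using ratio coef_pos[of n] by (intro mult_right_mono mult_left_mono) auto
  also have "\<dots> = \<bar>x\<bar> * norm (coef n * x ^ n)"
    using coef_pos[of n] by (simp add: abs_mult power_abs)
  finally show "norm (coef (Suc n) * x ^ Suc n) \<le> \<bar>x\<bar> * norm (coef n * x ^ n)" .
qed (use assms in simp)

lemma summable_diffs_coef: "\<bar>x\<bar> < 1 \<Longrightarrow> summable (\<lambda>n. diffs coef n * x ^ n)"
  using termdiff_converges[of x 1 coef] summable_coef by auto

lemma summable_diffs2_coef: "\<bar>x\<bar> < 1 \<Longrightarrow> summable (\<lambda>n. diffs (diffs coef) n * x ^ n)"
  using termdiff_converges[of x 1 "diffs coef"] summable_diffs_coef by auto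

lemma F_sums: "\<bar>x\<bar> < 1 \<Longrightarrow> (\<lambda>n. coef n * x ^ n) sums F x"
  unfolding F_def using summable_coef by (simp add: summable_sums)

lemma F'_sums: "\<bar>x\<bar> < 1 \<Longrightarrow> (\<lambda>n. diffs coef n * x ^ n) sums F' x"
  unfolding F'_def using summable_diffs_coef by (simp add: summable_sums)

lemma F''_sums: "\<bar>x\<bar> < 1 \<Longrightarrow> (\<lambda>n. diffs (diffs coef) n * x ^ n) sums F'' x"
  unfolding F''_def using summable_diffs2_coef by (simp add: summable_sums)

lemma F_deriv: "\<bar>x\<bar> < 1 \<Longrightarrow> (F has_real_derivative F' x) (at x)"
  unfolding F_def[abs_def] F'_def
  by (rule termdiffs_strong'[of 1]) (use summable_coef in auto)

lemma F'_deriv: "\<bar>x\<bar> < 1 \<Longrightarrow> (F' has_real_derivative F'' x) (at x)"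
  unfolding F'_def[abs_def] F''_def
  by (rule termdiffs_strong'[of 1]) (use summable_diffs_coef in auto)

lemma F_0: "F 0 = 1" and F'_0: "F' 0 = p / s"
  by (simp_all add: F_def F'_def coef_0 coef_1[simplified] diffs_def)

text \<open>On \<open>[0,1)\<close> all terms are nonnegative, so the series dominate their constant terms.\<close>

lemma F_ge_1: assumes "0 \<le> x" "x < 1" shows "1 \<le> F x"
proof -
  have "(\<Sum>n<1. coef n * x ^ n) \<le> F x"
    unfolding F_def using summable_coef[of x] assms
    by (intro sum_le_suminf) (auto intro!: mult_nonneg_nonneg simp: less_imp_le[OF coef_pos])
  then show ?thesis by (simp add: coef_0)
qed

lemma F'_ge: assumes "0 \<le> x" "x < 1" shows "p / s \<le> F' x"
proof -
  have "(\<Sum>n<1. diffs coef n * x ^ n) \<le> F' x"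
    unfolding F'_def using summable_diffs_coef[of x] assms
    by (intro sum_le_suminf) (auto simp: diffs_def less_imp_le[OF coef_pos] intro!: mult_nonneg_nonneg)
  then show ?thesis by (simp add: diffs_def coef_1[simplified])
qed

text \<open>Coefficientwise, Gauss' hypergeometric differential equation for \<open>F(c,d;c+d;x)\<close> is
  exactly the recurrence \<open>coef_rec\<close>.\<close>

lemma ODE_coefficients:
  "real n * (real n + 1) * coef (Suc n) - real n * (real n - 1) * coef n
     + s * diffs coef n - (s + 1) * (real n * coef n) - p * coef n = 0"
proof -
  have "real n * (real n + 1) * coef (Suc n) - real n * (real n - 1) * coef n
          + s * diffs coef n - (s + 1) * (real n * coef n) - p * coef n
      = (real n + 1) * (s + n) * coef (Suc n) - (c + n) * (d + n) * coef n"
    by (simp add: diffs_def p_def s_def algebra_simps)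
  also have "\<dots> = 0"
    by (simp add: coef_rec)
  finally show ?thesis .
qed

lemma hypergeometric_ODE:
  assumes x: "\<bar>x\<bar> < 1"
  shows "x * (1 - x) * F'' x + (s - (s + 1) * x) * F' x - p * F x = 0"
proof -
  define g1 where "g1 n = real n * (real n + 1) * coef (Suc n)" for n
  define g2 where "g2 n = real n * (real n - 1) * coef n" for n
  define g3 where "g3 n = real n * coef n" for n
  have shift1: "g1 (Suc n) = diffs (diffs coef) n"
    and shift2: "g2 (Suc n) = g1 n"
    and shift3: "g3 (Suc n) = diffs coef n" for n
    by (simp_all add: g1_def g2_def g3_def diffs_def algebra_simps)
  have xF'': "(\<lambda>n. g1 n * x ^ n) sums (x * F'' x)"
    by (rule sums_times_x) (simp_all only: shift1 F''_sums[OF x], simp add: g1_def)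
  have x2F'': "(\<lambda>n. g2 n * x ^ n) sums (x * (x * F'' x))"
    by (rule sums_times_x) (simp_all only: shift2 xF'', simp add: g2_def)
  have xF': "(\<lambda>n. g3 n * x ^ n) sums (x * F' x)"
    by (rule sums_times_x) (simp_all only: shift3 F'_sums[OF x], simp add: g3_def)
  have "(\<lambda>n. g1 n * x ^ n - g2 n * x ^ n + s * (diffs coef n * x ^ n) - (s + 1) * (g3 n * x ^ n)
          - p * (coef n * x ^ n))
        sums (x * F'' x - x * (x * F'' x) + s * F' x - (s + 1) * (x * F' x) - p * F x)"
    by (intro sums_diff sums_add sums_mult xF'' x2F'' xF' F'_sums F_sums x)
  moreover have "g1 n * x ^ n - g2 n * x ^ n + s * (diffs coef n * x ^ n) - (s + 1) * (g3 n * x ^ n)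
          - p * (coef n * x ^ n) = 0" for n
  proof -
    have "g1 n * x ^ n - g2 n * x ^ n + s * (diffs coef n * x ^ n) - (s + 1) * (g3 n * x ^ n)
          - p * (coef n * x ^ n)
        = (real n * (real n + 1) * coef (Suc n) - real n * (real n - 1) * coef n
           + s * diffs coef n - (s + 1) * (real n * coef n) - p * coef n) * x ^ n"
      by (simp add: g1_def g2_def g3_def algebra_simps)
    then show ?thesis by (simp add: ODE_coefficients)
  qed
  ultimately have "(\<lambda>n. 0) sums (x * F'' x - x * (x * F'' x) + s * F' x - (s + 1) * (x * F' x) - p * F x)"
    by simp
  then have "x * F'' x - x * (x * F'' x) + s * F' x - (s + 1) * (x * F' x) - p * F x = 0"
    by (rule sums_unique2[OF _ sums_zero])
  then show ?thesis by (simp add: algebra_simps)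
qed

text \<open>For \<open>cd \<le> c + d\<close> the coefficients decrease, hence \<open>(1 - x) F'(x) \<le> F(x)\<close> on \<open>[0,1)\<close>.\<close>

lemma one_minus_x_F'_le_F:
  assumes ps: "p \<le> s" and x: "0 \<le> x" "x < 1"
  shows "(1 - x) * F' x \<le> F x"
proof -
  have ax: "\<bar>x\<bar> < 1" using x by simp
  define g where "g n = real n * coef n" for n
  have shift: "g (Suc n) = diffs coef n" for n
    by (simp add: g_def diffs_def)
  have "(\<lambda>n. g n * x ^ n) sums (x * F' x)"
    by (rule sums_times_x) (simp_all only: shift F'_sums[OF ax], simp add: g_def)
  then have series: "(\<lambda>n. coef n * x ^ n - diffs coef n * x ^ n + g n * x ^ n)
      sums (F x - F' x + x * F' x)"
    by (intro sums_add sums_diff F_sums F'_sums ax)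
  have nonneg: "0 \<le> coef n * x ^ n - diffs coef n * x ^ n + g n * x ^ n" for n
  proof -
    have "coef n * x ^ n - diffs coef n * x ^ n + g n * x ^ n
        = (real n + 1) * (coef n - coef (Suc n)) * x ^ n"
      by (simp add: g_def diffs_def algebra_simps)
    then show ?thesis
      using coef_decreasing[OF ps, of n] x by simp
  qed
  have "0 \<le> F x - F' x + x * F' x"
    by (rule sums_le[OF nonneg sums_zero series])
  then show ?thesis by (simp add: algebra_simps)
qed

text \<open>The logarithmic derivative of \<open>u \<mapsto> g(logistic u)\<close>, \<open>g(x) = x F(x)\<close>, expressed in
  the variable \<open>x = logistic u\<close>; concavity of the theorem's function means that \<open>H\<close>
  decreases on \<open>(0,1)\<close>.\<close>

definition H :: "real \<Rightarrow> real" where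
  "H x = (1 - x) * (F x + x * F' x) / F x"

definition H' :: "real \<Rightarrow> real" where
  "H' x = ((- (F x + x * F' x) + (1 - x) * (2 * F' x + x * F'' x)) * F x
           - (1 - x) * (F x + x * F' x) * F' x) / (F x)\<^sup>2"

lemma H_deriv: assumes "0 \<le> x" "x < 1" shows "(H has_real_derivative H' x) (at x)"
proof -
  have "\<bar>x\<bar> < 1" "F x \<noteq> 0"
    using assms F_ge_1[OF assms] by auto
  then show ?thesis
    unfolding H_def[abs_def] H'_def
    by (auto intro!: derivative_eq_intros F_deriv F'_deriv simp: power2_eq_square algebra_simps)
qed

lemma H_0: "H 0 = 1" and H'_0: "H' 0 = p / s - 1"
  by (simp_all add: H_def H'_def F_0 F'_0)

text \<open>By the differential equation, \<open>H\<close> satisfies the first-order Riccati-type equation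
  \<open>x (1 - x) H'(x) = R(x, H(x))\<close>.\<close>

definition R :: "real \<Rightarrow> real \<Rightarrow> real" where
  "R x h = (1 - x) * ((p - s + 1) * x + s - 2 + (3 - s) * h) - h\<^sup>2"

definition R_x :: "real \<Rightarrow> real \<Rightarrow> real" where
  "R_x x h = - ((p - s + 1) * x + s - 2 + (3 - s) * h) + (1 - x) * (p - s + 1)"

definition R_h :: "real \<Rightarrow> real \<Rightarrow> real" where
  "R_h x h = (1 - x) * (3 - s) - 2 * h"

lemma H_Riccati: assumes "0 < x" "x < 1" shows "x * (1 - x) * H' x = R x (H x)"
proof -
  have F_pos: "0 < F x" using F_ge_1[of x] assms by simp
  have "x * (1 - x) * F'' x = p * F x - (s - (s + 1) * x) * F' x"
    using hypergeometric_ODE[of x] assms by (simp add: algebra_simps)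
  then have numerator: "- (F x + x * F' x) + (1 - x) * (2 * F' x + x * F'' x)
      = - (F x + x * F' x) + 2 * (1 - x) * F' x + (p * F x - (s - (s + 1) * x) * F' x)"
    by (simp add: algebra_simps)
  show ?thesis
    unfolding H'_def numerator H_def R_def using F_pos
    by (simp add: field_simps power2_eq_square)
qed

lemma R_H_deriv: assumes "0 \<le> x" "x < 1"
  shows "((\<lambda>x. R x (H x)) has_real_derivative R_x x (H x) + R_h x (H x) * H' x) (at x)"
  unfolding R_def[abs_def] R_x_def R_h_def
  by (auto intro!: derivative_eq_intros H_deriv[OF assms] simp: power2_eq_square algebra_simps)

lemma H_gt: assumes "0 < x" "x < 1" shows "1 - x < H x"
proof -
  have "0 < p / s"
    using p_pos s_pos by simp
  then have "0 < x * F' x"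
    using F'_ge[of x] assms by simp
  then have "(1 - x) * F x < (1 - x) * (F x + x * F' x)"
    using assms by simp
  then show ?thesis
    using F_ge_1[of x] assms unfolding H_def by (simp add: field_simps)
qed

lemma H_le_1: assumes "p \<le> s" "0 \<le> x" "x < 1" shows "H x \<le> 1"
proof -
  have "x * ((1 - x) * F' x) \<le> x * F x"
    using one_minus_x_F'_le_F[OF assms] assms by (intro mult_left_mono) auto
  then have "(1 - x) * (F x + x * F' x) \<le> F x"
    by (simp add: algebra_simps)
  then show ?thesis
    using F_ge_1[of x] assms unfolding H_def by (simp add: field_simps)
qed

text \<open>The key sign condition: where the Riccati curve \<open>R(x,h) = 0\<close> meets the region
  \<open>h > 1 - x\<close>, it is crossed downwards (\<open>\<partial>R/\<partial>x < 0\<close>), provided \<open>cd \<le> c + d\<close>.\<close>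

lemma R_x_neg:
  assumes ps: "p \<le> s" and x: "0 < x" "x < 1" and root: "R x h = 0" and h: "1 - x < h"
  shows "R_x x h < 0"
proof -
  define B where "B = (p - s + 1) * x + s - 2 + (3 - s) * h"
  have "(1 - x)\<^sup>2 * (p - s + 1) \<le> (1 - x)\<^sup>2"
    using ps by (intro mult_left_le) auto
  also have "\<dots> < h\<^sup>2"
    using h x by (intro power_strict_mono) auto
  also have "\<dots> = (1 - x) * B"
    using root by (simp add: R_def B_def)
  finally have "(1 - x) * ((1 - x) * (p - s + 1)) < (1 - x) * B"
    by (simp add: power2_eq_square algebra_simps)
  then have "(1 - x) * (p - s + 1) < B"
    using x by simp
  then show ?thesis
    by (simp add: R_x_def B_def)
qed

text \<open>If \<open>H'(y) > 0\<close>, then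
  \<open>K(x) = R(x, H(x)) = x (1 - x) H'(x)\<close> is positive at \<open>y\<close>.  Either \<open>K\<close> becomes positive after a
  last zero in \<open>(0,y)\<close>, where \<open>K' = R_x < 0\<close> contradicts the upcrossing; or \<open>H' > 0\<close> on all
  of \<open>(0,y]\<close>, so \<open>H(y) > H(0) = 1\<close>, contradicting \<open>H \<le> 1\<close>.\<close>

lemma H'_nonpos: assumes ps: "p \<le> s" and y: "0 < y" "y < 1" shows "H' y \<le> 0"
proof (rule ccontr)
  assume "\<not> H' y \<le> 0"
  define K where "K x = R x (H x)" for x
  define K' where "K' x = R_x x (H x) + R_h x (H x) * H' x" for x
  have K_deriv: "(K has_real_derivative K' x) (at x)" if "0 \<le> x" "x < 1" for x
    unfolding K_def[abs_def] K'_def using R_H_deriv[OF that] .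
  have K_eq: "K x = x * (1 - x) * H' x" if "0 < x" "x < 1" for x
    using H_Riccati[OF that] by (simp add: K_def)
  have "0 < K y"
    using K_eq[OF y] \<open>\<not> H' y \<le> 0\<close> y by simp
  show False
  proof (cases "\<exists>t. 0 < t \<and> t < y \<and> K t \<le> 0")
    case True
    then obtain t where t: "0 < t" "t < y" "K t \<le> 0" by blast
    have "(K has_real_derivative K' x) (at x)" if "t \<le> x" "x \<le> y" for x
      using K_deriv[of x] that t y by simp
    then obtain x where x: "t \<le> x" "x < y" "K x = 0" "0 \<le> K' x"
      using last_zero_before_positive[OF \<open>t < y\<close> \<open>K t \<le> 0\<close> \<open>0 < K y\<close>] by blast
    have x01: "0 < x" "x < 1" using t x y by auto
    then have "H' x = 0"
      using K_eq[OF x01] \<open>K x = 0\<close> by simp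
    moreover have "R_x x (H x) < 0"
      using R_x_neg[OF ps x01 _ H_gt[OF x01]] \<open>K x = 0\<close> by (simp add: K_def)
    ultimately show False using \<open>0 \<le> K' x\<close> by (simp add: K'_def)
  next
    case False
    have H'_pos: "0 < H' x" if "0 < x" "x \<le> y" for x
    proof -
      have "0 < K x"
        using False that \<open>0 < K y\<close> by (cases "x = y") (auto simp: not_le)
      moreover have "0 < x * (1 - x)"
        using that y by simp
      ultimately show ?thesis
        using K_eq[of x] that y by (simp add: zero_less_mult_iff)
    qed
    obtain \<xi> where "0 < \<xi>" "\<xi> < y" "H y - H 0 = (y - 0) * H' \<xi>"
      using MVT2[OF \<open>0 < y\<close>, of H H'] H_deriv y by force
    moreover have "0 < y * H' \<xi>"
      using H'_pos[of \<xi>] \<open>0 < \<xi>\<close> \<open>\<xi> < y\<close> y by simp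
    ultimately have "H 0 < H y"
      by simp
    then show False
      using H_le_1[OF ps, of y] H_0 y by simp
  qed
qed

lemma H_antimono:
  assumes ps: "p \<le> s" and "0 < x" "x \<le> y" "y < 1"
  shows "H y \<le> H x"
proof (rule DERIV_nonpos_imp_nonincreasing[OF \<open>x \<le> y\<close>])
  fix t assume "x \<le> t" "t \<le> y"
  then have "0 < t" "t < 1" using assms by auto
  then have "(H has_real_derivative H' t) (at t)" "H' t \<le> 0"
    using H_deriv H'_nonpos[OF ps] by simp_all
  then show "\<exists>D. (H has_real_derivative D) (at t) \<and> D \<le> 0" by blast
qed

text \<open>Necessity: for \<open>cd > c + d\<close> we have \<open>H'(0) = cd/(c+d) - 1 > 0\<close>, so \<open>H\<close> rises to the
  right of \<open>0\<close>, which is incompatible with \<open>H\<close> decreasing on \<open>(0,1)\<close> and continuous at \<open>0\<close>.\<close>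

lemma antimono_H_imp:
  assumes antimono: "\<And>x y. 0 < x \<Longrightarrow> x \<le> y \<Longrightarrow> y < 1 \<Longrightarrow> H y \<le> H x"
  shows "p \<le> s"
proof (rule ccontr)
  assume "\<not> p \<le> s"
  then have "0 < H' 0"
    using s_pos by (simp add: H'_0 field_simps)
  then obtain \<delta> where "0 < \<delta>" and rises: "\<And>h. 0 < h \<Longrightarrow> h < \<delta> \<Longrightarrow> H 0 < H (0 + h)"
    using DERIV_pos_inc_right[OF H_deriv[of 0]] by force
  define h where "h = min \<delta> 1 / 2"
  have h: "0 < h" "h < \<delta>" "h < 1"
    using \<open>0 < \<delta>\<close> by (auto simp: h_def)
  have "(H \<longlongrightarrow> H 0) (at_right 0)"
    using DERIV_isCont[OF H_deriv[of 0]] by (simp add: isCont_def filterlim_at_split)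
  moreover have "eventually (\<lambda>t. H h \<le> H t) (at_right 0)"
    using eventually_at_right_real[OF \<open>0 < h\<close>] by eventually_elim (use antimono h in auto)
  ultimately have "H h \<le> H 0"
    by (rule tendsto_lowerbound) simp
  then show False
    using rises[OF h(1,2)] by simp
qed

lemma antimono_H_iff: "(\<forall>x y. 0 < x \<longrightarrow> x \<le> y \<longrightarrow> y < 1 \<longrightarrow> H y \<le> H x) \<longleftrightarrow> p \<le> s"
  using H_antimono antimono_H_imp by blast

lemma log_g_logistic_deriv:
  "((\<lambda>u. ln (logistic u * F (logistic u))) has_real_derivative H (logistic u)) (at u)"
proof -
  define x where "x = logistic u"
  have x: "0 < x" "x < 1"
    using logistic_bounds by (auto simp: x_def)
  have "1 \<le> F x"
    using F_ge_1 x by simp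
  moreover have "(F has_real_derivative F' x) (at x)"
    using F_deriv x by simp
  ultimately have "((\<lambda>u. ln (logistic u * F (logistic u))) has_real_derivative
      (F x + x * F' x) * (x * (1 - x)) / (x * F x)) (at u)"
    using x unfolding x_def
    by (auto intro!: derivative_eq_intros DERIV_chain2[of F] logistic_deriv simp: field_simps)
  moreover have "(F x + x * F' x) * (x * (1 - x)) / (x * F x) = H x"
    using x \<open>1 \<le> F x\<close> by (simp add: H_def field_simps)
  ultimately show ?thesis
    by (simp add: x_def)
qed

end

theorem mainTheorem5:
  fixes c d :: real
  assumes "c > 0" and "d > 0"
  shows "concave_on UNIV
           (\<lambda>u. ln ((\<lambda>x. x * hyp2F1 c d (c + d) x) (exp u / (1 + exp u))))
         \<longleftrightarrow> 1 / c + 1 / d \<ge> 1"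
proof -
  interpret zero_balanced c d
    using assms by unfold_locales
  have "(\<lambda>u. ln ((\<lambda>x. x * hyp2F1 c d (c + d) x) (exp u / (1 + exp u))))
      = (\<lambda>u. ln (logistic u * F (logistic u)))"
    by (simp add: F_eq_hyp2F1 logistic_def)
  moreover have "1 / c + 1 / d \<ge> 1 \<longleftrightarrow> p \<le> s"
    using assms by (simp add: p_def s_def field_simps)
  ultimately show ?thesis
    using concave_on_UNIV_logistic_iff[OF log_g_logistic_deriv] antimono_H_iff by simp
qed

end
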